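(* For binary matrices $P\in\{0,1\}^{k\times\ell}$ and $M\in\{0,1\}^{m\times n}$ the following are equivalent: 1. $P$ is an interval minor of $M$; 2. $M$ has a partition containing $P$; 3. $P$ has an embedding into $M$; 4. $P$ has a partial embedding into $M$.
   Context: Rows are numbered top to bottom, columns left to right; $(i,j)$ is the entry in row $i$, column $j$, a 1-entry if it equals 1. For integers, $[a,b]=\{a,\dots,b\}$, $(a,b]=[a+1,b]$, $[n]=[1,n]$. A row contraction in $M$ replaces two adjacent rows $r,r+1$ by a single row whose entry in column $j$ is $\max\{M(r,j),M(r+1,j)\}$; column contraction is analogous. A matrix $M'$ dominates $M$ if they have the same dimensions and every 1-entry of $M$ is a 1-entry of $M'$. $P$ is an interval minor of $M$ if $M$ can be transformed by a sequence of row and column contractions into a $k\times\ell$ matrix dominating $P$. A partition of $M$ containing $P$ is a choice of integers $0\le r_0<r_1<\dots<r_k\le m$ and $0\le c_0<c_1<\dots<c_\ell\le n$ such that for every 1-entry $(i,j)$ of $P$ the submatrix of $M$ on rows $(r_{i-1},r_i]$ and columns $(c_{j-1},c_j]$ has a 1-entry. An embedding of $P$ into $M$ is a map $\phi:[k]\times[\ell]\to[m]\times[n]$ sending 1-entries of $P$ to 1-entries of $M$ such that for any entries $e_1=(i_1,j_1)$, $e_2=(i_2,j_2)$ with $\phi(e_1)=(i_1^*,j_1^* )$, $\phi(e_2)=(i_2^*,j_2^* )$: $i_1<i_2$ implies $i_1^*<i_2^*$, and $j_1<j_2$ implies $j_1^*<j_2^*$. For a nonempty $S\subseteq[k]\times[\ell]$,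 a partial embedding is a map $\psi:S\to[m]\times[n]$ such that: every 1-entry $e$ of $P$ lies in $S$ and $\psi(e)$ is a 1-entry of $M$; each $e=(i,j)\in S$ is mapped to $(i^*,j^* )$ with $i\le i^*$, $j\le j^*$, $k-i\le m-i^*$, $\ell-j\le n-j^*$; and for $e_1=(i_1,j_1)$, $e_2=(i_2,j_2)$ in $S$ with images $(i_1^*,j_1^* )$, $(i_2^*,j_2^* )$: if $i_1<i_2$ then $i_2-i_1\le i_2^*-i_1^*$, and if $j_1<j_2$ then $j_2-j_1\le j_2^*-j_1^*$. *)

theory Defs
  imports Main
begin

text \<open>A binary matrix with r rows and c columns is represented by its dimensions
together with a predicate A :: nat \<Rightarrow> nat \<Rightarrow> bool; A i j holds iff entry (i,j)
(1-based, 1 \<le> i \<le> r, 1 \<le> j \<le> c) is a 1-entry. Values outside the index range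
are irrelevant.\<close>

type_synonym bmat = "nat \<Rightarrow> nat \<Rightarrow> bool"

definition row_contract :: "nat \<Rightarrow> bmat \<Rightarrow> bmat" where
  "row_contract r A = (\<lambda>i j. if i < r then A i j
                              else if i = r then (A r j \<or> A (Suc r) j)
                              else A (Suc i) j)"

definition col_contract :: "nat \<Rightarrow> bmat \<Rightarrow> bmat" where
  "col_contract c A = (\<lambda>i j. if j < c then A i j
                              else if j = c then (A i c \<or> A i (Suc c))
                              else A i (Suc j))"

inductive contract_step :: "nat \<times> nat \<times> bmat \<Rightarrow> nat \<times> nat \<times> bmat \<Rightarrow> bool" where
  row: "1 \<le> r \<Longrightarrow> r < m \<Longrightarrow> contract_step (m, n, A) (m - 1, n, row_contract r A)"
| col: "1 \<le> c \<Longrightarrow> c < n \<Longrightarrow> contract_step (m, n, A) (m, n - 1, col_contract c A)"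

definition dominates :: "nat \<Rightarrow> nat \<Rightarrow> bmat \<Rightarrow> bmat \<Rightarrow> bool" where
  "dominates k l A' A \<longleftrightarrow> (\<forall>i\<in>{1..k}. \<forall>j\<in>{1..l}. A i j \<longrightarrow> A' i j)"

definition interval_minor :: "bmat \<Rightarrow> nat \<Rightarrow> nat \<Rightarrow> bmat \<Rightarrow> nat \<Rightarrow> nat \<Rightarrow> bool" where
  "interval_minor P k l M m n \<longleftrightarrow>
     (\<exists>M'. contract_step\<^sup>*\<^sup>* (m, n, M) (k, l, M') \<and> dominates k l M' P)"

definition has_partition_containing :: "bmat \<Rightarrow> nat \<Rightarrow> nat \<Rightarrow> bmat \<Rightarrow> nat \<Rightarrow> nat \<Rightarrow> bool" where
  "has_partition_containing P k l M m n \<longleftrightarrow>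
     (\<exists>r c :: nat \<Rightarrow> nat.
        (\<forall>i<k. r i < r (Suc i)) \<and> r k \<le> m \<and>
        (\<forall>j<l. c j < c (Suc j)) \<and> c l \<le> n \<and>
        (\<forall>i\<in>{1..k}. \<forall>j\<in>{1..l}. P i j \<longrightarrow>
            (\<exists>a\<in>{r (i - 1)<..r i}. \<exists>b\<in>{c (j - 1)<..c j}. M a b)))"

definition is_embedding ::
  "(nat \<times> nat \<Rightarrow> nat \<times> nat) \<Rightarrow> bmat \<Rightarrow> nat \<Rightarrow> nat \<Rightarrow> bmat \<Rightarrow> nat \<Rightarrow> nat \<Rightarrow> bool" where
  "is_embedding \<phi> P k l M m n \<longleftrightarrow>
     (\<forall>e\<in>{1..k} \<times> {1..l}. \<phi> e \<in> {1..m} \<times> {1..n}) \<and>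
     (\<forall>e\<in>{1..k} \<times> {1..l}. P (fst e) (snd e) \<longrightarrow> M (fst (\<phi> e)) (snd (\<phi> e))) \<and>
     (\<forall>e1\<in>{1..k} \<times> {1..l}. \<forall>e2\<in>{1..k} \<times> {1..l}.
        (fst e1 < fst e2 \<longrightarrow> fst (\<phi> e1) < fst (\<phi> e2)) \<and>
        (snd e1 < snd e2 \<longrightarrow> snd (\<phi> e1) < snd (\<phi> e2)))"

definition has_embedding :: "bmat \<Rightarrow> nat \<Rightarrow> nat \<Rightarrow> bmat \<Rightarrow> nat \<Rightarrow> nat \<Rightarrow> bool" where
  "has_embedding P k l M m n \<longleftrightarrow> (\<exists>\<phi>. is_embedding \<phi> P k l M m n)"

definition is_partial_embedding ::
  "(nat \<times> nat) set \<Rightarrow> (nat \<times> nat \<Rightarrow> nat \<times> nat) \<Rightarrow> bmat \<Rightarrow> nat \<Rightarrow> nat \<Rightarrow> bmat \<Rightarrow> nat \<Rightarrow> nat \<Rightarrow> bool" where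
  "is_partial_embedding S \<psi> P k l M m n \<longleftrightarrow>
     S \<noteq> {} \<and> S \<subseteq> {1..k} \<times> {1..l} \<and>
     (\<forall>e\<in>S. \<psi> e \<in> {1..m} \<times> {1..n}) \<and>
     (\<forall>e\<in>{1..k} \<times> {1..l}. P (fst e) (snd e) \<longrightarrow> e \<in> S \<and> M (fst (\<psi> e)) (snd (\<psi> e))) \<and>
     (\<forall>e\<in>S. fst e \<le> fst (\<psi> e) \<and> snd e \<le> snd (\<psi> e) \<and>
             int k - int (fst e) \<le> int m - int (fst (\<psi> e)) \<and>
             int l - int (snd e) \<le> int n - int (snd (\<psi> e))) \<and>
     (\<forall>e1\<in>S. \<forall>e2\<in>S.
        (fst e1 < fst e2 \<longrightarrow>
           int (fst e2) - int (fst e1) \<le> int (fst (\<psi> e2)) - int (fst (\<psi> e1))) \<and>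
        (snd e1 < snd e2 \<longrightarrow>
           int (snd e2) - int (snd e1) \<le> int (snd (\<psi> e2)) - int (snd (\<psi> e1))))"

definition has_partial_embedding :: "bmat \<Rightarrow> nat \<Rightarrow> nat \<Rightarrow> bmat \<Rightarrow> nat \<Rightarrow> nat \<Rightarrow> bool" where
  "has_partial_embedding P k l M m n \<longleftrightarrow> (\<exists>S \<psi>. is_partial_embedding S \<psi> P k l M m n)"

end

theory Submission
  imports Defs
begin

(* A sequence of cuts r 0 < ... < r k splits the rows into blocks (r (i - 1), r i]; contracting
   every block (and likewise for columns) yields the matrix blocks r c M. Contracting rows t and
   t + 1 is itself such a block matrix, and block matrices compose, so the matrices reachable by
   contractions are exactly the block matrices of partitions: this gives (1) iff (2).
   Choosing a 1-entry of M in each block that must contain one turns a partition into an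
   embedding. Order preservation forces images of entries to differ by at least the difference
   of their indices, so an embedding is a partial embedding on the whole grid. Conversely, the
   gap conditions of a partial embedding are exactly what is needed to place cuts between the
   images of consecutive rows (and columns), which recovers a partition. *)

definition blocks :: "(nat \<Rightarrow> nat) \<Rightarrow> (nat \<Rightarrow> nat) \<Rightarrow> bmat \<Rightarrow> bmat" where
  "blocks r c M = (\<lambda>i j. \<exists>a\<in>{r (i - 1)<..r i}. \<exists>b\<in>{c (j - 1)<..c j}. M a b)"

definition cut_sequence :: "nat \<Rightarrow> nat \<Rightarrow> (nat \<Rightarrow> nat) \<Rightarrow> bool" where
  "cut_sequence k m r \<longleftrightarrow> (\<forall>i<k. r i < r (Suc i)) \<and> r k \<le> m"

definition merge_cuts :: "nat \<Rightarrow> nat \<Rightarrow> nat" where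
  "merge_cuts t y = (if y < t then y else Suc y)"

lemma increasing_gap:
  fixes r :: "nat \<Rightarrow> nat"
  assumes "\<forall>x<k. r x < r (Suc x)" and "i \<le> j" and "j \<le> k"
  shows "r i + (j - i) \<le> r j"
  using assms(2,3)
proof (induction j)
  case (Suc j)
  show ?case
  proof (cases "i = Suc j")
    case False
    with Suc have "r i + (j - i) \<le> r j" "r j < r (Suc j)" using assms(1) by auto
    with False Suc.prems show ?thesis by linarith
  qed simp
qed simp

lemma increasing_mono:
  fixes r :: "nat \<Rightarrow> nat"
  assumes "\<forall>x<k. r x < r (Suc x)" and "i \<le> j" and "j \<le> k"
  shows "r i \<le> r j"
  using increasing_gap[OF assms] by simp

lemma bex_merged_intervals:
  fixes f :: "nat \<Rightarrow> nat" and p q :: nat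
  assumes "mono f" and "p \<le> q"
  shows "(\<exists>a\<in>{p<..q}. \<exists>x\<in>{f (a - 1)<..f a}. Q x) \<longleftrightarrow> (\<exists>x\<in>{f p<..f q}. Q x)"
  using assms(2)
proof (induction q)
  case (Suc q)
  show ?case
  proof (cases "p = Suc q")
    case False
    with Suc have "p \<le> q" by simp
    have "{f p<..f (Suc q)} = {f p<..f q} \<union> {f q<..f (Suc q)}"
      using monoD[OF assms(1), of p q] monoD[OF assms(1), of q "Suc q"] \<open>p \<le> q\<close> by auto
    moreover have "{p<..Suc q} = insert (Suc q) {p<..q}" using \<open>p \<le> q\<close> by auto
    ultimately show ?thesis using Suc.IH[OF \<open>p \<le> q\<close>] by auto
  qed simp
qed simp

lemma blocks_blocks:
  assumes "mono r'" "mono c'" "r (i - 1) \<le> r i" "c (j - 1) \<le> c j"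
  shows "blocks r c (blocks r' c' M) i j = blocks (r' \<circ> r) (c' \<circ> c) M i j"
proof -
  have "blocks r c (blocks r' c' M) i j =
      (\<exists>a\<in>{r (i - 1)<..r i}. \<exists>x\<in>{r' (a - 1)<..r' a}.
         \<exists>b\<in>{c (j - 1)<..c j}. \<exists>y\<in>{c' (b - 1)<..c' b}. M x y)"
    unfolding blocks_def by blast
  also have "\<dots> = blocks (r' \<circ> r) (c' \<circ> c) M i j"
    unfolding bex_merged_intervals[OF assms(2,4)] bex_merged_intervals[OF assms(1,3)]
    by (simp add: blocks_def)
  finally show ?thesis .
qed

lemma blocks_cong_pos:
  assumes "\<And>i j. 1 \<le> i \<Longrightarrow> 1 \<le> j \<Longrightarrow> A i j = B i j"
  shows "blocks r c A = blocks r c B"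
  unfolding blocks_def using assms by (intro ext bex_cong refl) auto

lemma blocks_cong_cuts:
  assumes "\<forall>x\<le>k. r x = r' x" "\<forall>y\<le>l. c y = c' y" "i \<in> {1..k}" "j \<in> {1..l}"
  shows "blocks r c M i j = blocks r' c' M i j"
proof -
  have "r (i - 1) = r' (i - 1)" "r i = r' i" "c (j - 1) = c' (j - 1)" "c j = c' j"
    using assms by auto
  then show ?thesis by (simp add: blocks_def)
qed

lemma blocks_id_id:
  assumes "1 \<le> i" "1 \<le> j"
  shows "blocks id id M i j = M i j"
proof -
  have "{i - 1<..i} = {i}" "{j - 1<..j} = {j}" using assms by auto
  then show ?thesis by (simp add: blocks_def)
qed

lemma mono_merge_cuts: "mono (merge_cuts t)"
  by (auto intro!: monoI simp: merge_cuts_def)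

lemma row_contract_eq_blocks:
  assumes "1 \<le> t" "1 \<le> i" "1 \<le> j"
  shows "row_contract t M i j = blocks (merge_cuts t) id M i j"
proof -
  have "{merge_cuts t (i - 1)<..merge_cuts t i} =
      (if i < t then {i} else if i = t then {t, Suc t} else {Suc i})"
    using assms by (auto simp: merge_cuts_def)
  moreover have "{j - 1<..j} = {j}" using assms by auto
  ultimately show ?thesis by (auto simp: row_contract_def blocks_def)
qed

lemma col_contract_eq_blocks:
  assumes "1 \<le> t" "1 \<le> i" "1 \<le> j"
  shows "col_contract t M i j = blocks id (merge_cuts t) M i j"
proof -
  have "{merge_cuts t (j - 1)<..merge_cuts t j} =
      (if j < t then {j} else if j = t then {t, Suc t} else {Suc j})"
    using assms by (auto simp: merge_cuts_def)
  moreover have "{i - 1<..i} = {i}" using assms by auto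
  ultimately show ?thesis by (auto simp: col_contract_def blocks_def)
qed

lemma cut_sequence_merge:
  assumes "cut_sequence k m r" "1 \<le> t" "t < k"
  shows "cut_sequence (k - 1) m (r \<circ> merge_cuts t)"
  unfolding cut_sequence_def
proof (intro conjI allI impI)
  fix x assume "x < k - 1"
  then have "merge_cuts t x < merge_cuts t (Suc x)" "merge_cuts t (Suc x) \<le> k"
    by (auto simp: merge_cuts_def)
  then show "(r \<circ> merge_cuts t) x < (r \<circ> merge_cuts t) (Suc x)"
    using increasing_gap[of k r "merge_cuts t x" "merge_cuts t (Suc x)"] assms(1)
    by (simp add: cut_sequence_def)
next
  show "(r \<circ> merge_cuts t) (k - 1) \<le> m"
  proof -
    have "merge_cuts t (k - 1) = k" using assms(2,3) by (simp add: merge_cuts_def)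
    then show ?thesis using assms(1) by (simp add: cut_sequence_def)
  qed
qed

(* Row 0 and column 0 carry junk values under contractions but are never read by blocks,
   so the invariant is equality at all positive indices. *)
lemma contract_steps_imp_blocks:
  assumes "contract_step\<^sup>*\<^sup>* (m, n, M) (k, l, A)"
  shows "\<exists>r c. mono r \<and> mono c \<and> cut_sequence k m r \<and> cut_sequence l n c \<and>
           (\<forall>i\<ge>1. \<forall>j\<ge>1. A i j = blocks r c M i j)"
  using assms
proof (induction "(k, l, A)" arbitrary: k l A rule: rtranclp_induct)
  case base
  show ?case
    by (intro exI[of _ id] conjI) (auto simp: cut_sequence_def blocks_id_id mono_def)
next
  case (step s)
  obtain k0 l0 A0 where s: "s = (k0, l0, A0)" by (cases s)
  with step(3) obtain r c where rc: "mono r" "mono c" "cut_sequence k0 m r" "cut_sequence l0 n c"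
      "\<forall>i\<ge>1. \<forall>j\<ge>1. A0 i j = blocks r c M i j"
    by blast
  have A0: "blocks r' c' A0 = blocks r' c' (blocks r c M)" for r' c'
    using rc(5) by (intro blocks_cong_pos) simp
  have mono_comp: "mono (f \<circ> merge_cuts t)" if "mono f" for f t
    using that mono_merge_cuts[of t] by (auto simp: mono_def)
  from step(2)[unfolded s] show ?case
  proof cases
    case (row t)
    have "row_contract t A0 i j = blocks (r \<circ> merge_cuts t) c M i j" if "1 \<le> i" "1 \<le> j" for i j
    proof -
      have "row_contract t A0 i j = blocks (merge_cuts t) id (blocks r c M) i j"
        using row that by (simp add: row_contract_eq_blocks A0)
      also have "\<dots> = blocks (r \<circ> merge_cuts t) c M i j"
        using rc(1,2) mono_merge_cuts[of t] by (simp add: blocks_blocks monoD)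
      finally show ?thesis .
    qed
    then show ?thesis
      using row cut_sequence_merge[OF rc(3)] rc mono_comp[OF rc(1)] by blast
  next
    case (col t)
    have "col_contract t A0 i j = blocks r (c \<circ> merge_cuts t) M i j" if "1 \<le> i" "1 \<le> j" for i j
    proof -
      have "col_contract t A0 i j = blocks id (merge_cuts t) (blocks r c M) i j"
        using col that by (simp add: col_contract_eq_blocks A0)
      also have "\<dots> = blocks r (c \<circ> merge_cuts t) M i j"
        using rc(1,2) mono_merge_cuts[of t] by (simp add: blocks_blocks monoD)
      finally show ?thesis .
    qed
    then show ?thesis
      using col cut_sequence_merge[OF rc(4)] rc mono_comp[OF rc(2)] by blast
  qed
qed

lemma has_partition_containing_iff:
  "has_partition_containing P k l M m n \<longleftrightarrow>
     (\<exists>r c. cut_sequence k m r \<and> cut_sequence l n c \<and>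
        (\<forall>i\<in>{1..k}. \<forall>j\<in>{1..l}. P i j \<longrightarrow> blocks r c M i j))"
  unfolding has_partition_containing_def cut_sequence_def blocks_def by blast

lemma interval_minor_imp_partition:
  assumes "interval_minor P k l M m n"
  shows "has_partition_containing P k l M m n"
proof -
  obtain A where "contract_step\<^sup>*\<^sup>* (m, n, M) (k, l, A)" and "dominates k l A P"
    using assms unfolding interval_minor_def by blast
  then show ?thesis
    unfolding has_partition_containing_iff dominates_def
    by (fastforce dest: contract_steps_imp_blocks)
qed

lemma tight_increasing_eq_id:
  assumes "\<forall>x<k. r x < r (Suc x)" "r 0 = 0" "r k = k" "x \<le> k"
  shows "r x = x"
  using increasing_gap[OF assms(1), of 0 x] increasing_gap[OF assms(1), of x k] assms(2-4) by linarith

lemma increasing_factor_merge_cuts: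
  assumes st: "\<forall>x<k. r x < r (Suc x)" and r0: "r 0 = 0" and rk: "r k = m" and "k < m"
  obtains t r' where "1 \<le> t" "t < m" "\<forall>x<k. r' x < r' (Suc x)" "r' 0 = 0" "r' k = m - 1"
    "\<forall>x\<le>k. merge_cuts t (r' x) = r x"
proof -
  obtain t where "t \<le> k" and below: "\<forall>x<t. \<not> x < r x" and "t < r t"
    using ex_least_nat_le[of "\<lambda>x. x < r x" k] \<open>k < m\<close> rk by blast
  have "1 \<le> t" using \<open>t < r t\<close> r0 by (cases t) auto
  have id_below: "r x = x" if "x < t" for x
    using below that increasing_gap[OF st, of 0 x] r0 \<open>t \<le> k\<close> by force
  have above: "t < r x" if "t \<le> x" "x \<le> k" for x
    using increasing_gap[OF st, of t x] that \<open>t < r t\<close> by linarith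
  define r' where "r' y = (if y < t then r y else r y - 1)" for y
  show thesis
  proof
    show "1 \<le> t" by fact
    show "t < m" using above[of k] \<open>t \<le> k\<close> rk by simp
    show "r' 0 = 0" "r' k = m - 1" using \<open>1 \<le> t\<close> \<open>t \<le> k\<close> r0 rk by (simp_all add: r'_def)
    show "\<forall>x<k. r' x < r' (Suc x)"
    proof (intro allI impI)
      fix x assume "x < k"
      then show "r' x < r' (Suc x)"
        using st id_below[of x] above[of x] above[of "Suc x"] by (auto simp: r'_def)
    qed
    show "\<forall>x\<le>k. merge_cuts t (r' x) = r x"
    proof (intro allI impI)
      fix x assume "x \<le> k"
      then show "merge_cuts t (r' x) = r x"
        using id_below[of x] above[of x] by (cases "x < t") (auto simp: r'_def merge_cuts_def)
    qed
  qed
qed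

lemma blocks_reachable:
  assumes "\<forall>x<k. r x < r (Suc x)" "r 0 = 0" "r k = m"
    and "\<forall>y<l. c y < c (Suc y)" "c 0 = 0" "c l = n"
  shows "\<exists>A. contract_step\<^sup>*\<^sup>* (m, n, M) (k, l, A) \<and>
           (\<forall>i\<in>{1..k}. \<forall>j\<in>{1..l}. A i j = blocks r c M i j)"
  using assms
proof (induction "m + n" arbitrary: m n M r c rule: less_induct)
  case less
  note r = less.prems(1-3) and c = less.prems(4-6)
  have r_le: "r (i - 1) \<le> r i" if "i \<in> {1..k}" for i
    using that by (intro increasing_mono[OF r(1)]) auto
  have c_le: "c (j - 1) \<le> c j" if "j \<in> {1..l}" for j
    using that by (intro increasing_mono[OF c(1)]) auto
  have "k \<le> m" "l \<le> n"
    using increasing_gap[OF r(1), of 0 k] increasing_gap[OF c(1), of 0 l] r c by simp_all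
  then consider "k < m" | "l < n" | "m = k" "n = l"
    by linarith
  then show ?case
  proof cases
    case 1
    then obtain t r' where t: "1 \<le> t" "t < m" and r': "\<forall>x<k. r' x < r' (Suc x)" "r' 0 = 0"
        "r' k = m - 1" and factor: "\<forall>x\<le>k. merge_cuts t (r' x) = r x"
      using increasing_factor_merge_cuts[OF r] by blast
    obtain A where A: "contract_step\<^sup>*\<^sup>* (m - 1, n, row_contract t M) (k, l, A)"
        "\<forall>i\<in>{1..k}. \<forall>j\<in>{1..l}. A i j = blocks r' c (row_contract t M) i j"
      using less.hyps[of "m - 1" n r' c "row_contract t M"] r' c t by auto
    have "blocks r' c (row_contract t M) i j = blocks r c M i j" if "i \<in> {1..k}" "j \<in> {1..l}" for i j
    proof -
      have r'_le: "r' (i - 1) \<le> r' i" using that by (intro increasing_mono[OF r'(1)]) auto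
      have "blocks r' c (row_contract t M) i j = blocks r' c (blocks (merge_cuts t) id M) i j"
        using t by (subst blocks_cong_pos[of _ "blocks (merge_cuts t) id M"])
          (simp_all add: row_contract_eq_blocks)
      also have "\<dots> = blocks (merge_cuts t \<circ> r') c M i j"
        using blocks_blocks[OF mono_merge_cuts _ r'_le c_le[OF that(2)]] by (simp add: mono_def)
      also have "\<dots> = blocks r c M i j"
        using factor that by (intro blocks_cong_cuts[of k _ _ l]) auto
      finally show ?thesis .
    qed
    moreover have "contract_step\<^sup>*\<^sup>* (m, n, M) (k, l, A)"
      using contract_step.row[OF t] A(1) by (rule converse_rtranclp_into_rtranclp)
    ultimately show ?thesis
      using A(2) by auto
  next
    case 2
    then obtain t c' where t: "1 \<le> t" "t < n" and c': "\<forall>x<l. c' x < c' (Suc x)" "c' 0 = 0"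
        "c' l = n - 1" and factor: "\<forall>x\<le>l. merge_cuts t (c' x) = c x"
      using increasing_factor_merge_cuts[OF c] by blast
    obtain A where A: "contract_step\<^sup>*\<^sup>* (m, n - 1, col_contract t M) (k, l, A)"
        "\<forall>i\<in>{1..k}. \<forall>j\<in>{1..l}. A i j = blocks r c' (col_contract t M) i j"
      using less.hyps[of m "n - 1" r c' "col_contract t M"] r c' t by auto
    have "blocks r c' (col_contract t M) i j = blocks r c M i j" if "i \<in> {1..k}" "j \<in> {1..l}" for i j
    proof -
      have c'_le: "c' (j - 1) \<le> c' j" using that by (intro increasing_mono[OF c'(1)]) auto
      have "blocks r c' (col_contract t M) i j = blocks r c' (blocks id (merge_cuts t) M) i j"
        using t by (subst blocks_cong_pos[of _ "blocks id (merge_cuts t) M"])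
          (simp_all add: col_contract_eq_blocks)
      also have "\<dots> = blocks r (merge_cuts t \<circ> c') M i j"
        using blocks_blocks[OF _ mono_merge_cuts r_le[OF that(1)] c'_le] by (simp add: mono_def)
      also have "\<dots> = blocks r c M i j"
        using factor that by (intro blocks_cong_cuts[of k _ _ l]) auto
      finally show ?thesis .
    qed
    moreover have "contract_step\<^sup>*\<^sup>* (m, n, M) (k, l, A)"
      using contract_step.col[OF t] A(1) by (rule converse_rtranclp_into_rtranclp)
    ultimately show ?thesis
      using A(2) by auto
  next
    case 3
    have "blocks r c M i j = blocks id id M i j" if "i \<in> {1..k}" "j \<in> {1..l}" for i j
      using tight_increasing_eq_id[OF r(1,2)] tight_increasing_eq_id[OF c(1,2)] r(3) c(3) 3 that
      by (intro blocks_cong_cuts[of k _ _ l]) auto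
    then show ?thesis
      using 3 by (intro exI[of _ M]) (auto simp: blocks_id_id)
  qed
qed

lemma cut_sequence_normalize:
  assumes "cut_sequence k m r" "1 \<le> k"
  obtains r' where "\<forall>x<k. r' x < r' (Suc x)" "r' 0 = 0" "r' k = m"
    "\<forall>i\<in>{1..k}. {r (i - 1)<..r i} \<subseteq> {r' (i - 1)<..r' i}"
proof
  define r' where "r' x = (if x = 0 then 0 else if x = k then m else r x)" for x
  have st: "\<forall>x<k. r x < r (Suc x)" and "r k \<le> m" using assms(1) by (auto simp: cut_sequence_def)
  show "\<forall>x<k. r' x < r' (Suc x)"
  proof (intro allI impI)
    fix x assume "x < k"
    then show "r' x < r' (Suc x)"
      using st increasing_gap[OF st, of "Suc x" k] \<open>r k \<le> m\<close> by (auto simp: r'_def)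
  qed
  show "r' 0 = 0" "r' k = m" using assms(2) by (simp_all add: r'_def)
  show "\<forall>i\<in>{1..k}. {r (i - 1)<..r i} \<subseteq> {r' (i - 1)<..r' i}"
    using \<open>r k \<le> m\<close> by (auto simp: r'_def)
qed

lemma partition_imp_interval_minor:
  assumes "has_partition_containing P k l M m n" "1 \<le> k" "1 \<le> l"
  shows "interval_minor P k l M m n"
proof -
  obtain r c where r: "cut_sequence k m r" and c: "cut_sequence l n c"
      and P: "\<forall>i\<in>{1..k}. \<forall>j\<in>{1..l}. P i j \<longrightarrow> blocks r c M i j"
    using assms(1) unfolding has_partition_containing_iff by blast
  obtain r' where r': "\<forall>x<k. r' x < r' (Suc x)" "r' 0 = 0" "r' k = m"
      and r_sub: "\<forall>i\<in>{1..k}. {r (i - 1)<..r i} \<subseteq> {r' (i - 1)<..r' i}"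
    using cut_sequence_normalize[OF r assms(2)] by blast
  obtain c' where c': "\<forall>x<l. c' x < c' (Suc x)" "c' 0 = 0" "c' l = n"
      and c_sub: "\<forall>j\<in>{1..l}. {c (j - 1)<..c j} \<subseteq> {c' (j - 1)<..c' j}"
    using cut_sequence_normalize[OF c assms(3)] by blast
  obtain A where "contract_step\<^sup>*\<^sup>* (m, n, M) (k, l, A)"
      and A: "\<forall>i\<in>{1..k}. \<forall>j\<in>{1..l}. A i j = blocks r' c' M i j"
    using blocks_reachable[OF r' c'] by blast
  moreover have "dominates k l A P"
    unfolding dominates_def
  proof (intro ballI impI)
    fix i j assume ij: "i \<in> {1..k}" "j \<in> {1..l}" and "P i j"
    then have "blocks r c M i j" using P by blast
    then show "A i j"
      using A r_sub c_sub ij unfolding blocks_def by blast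
  qed
  ultimately show ?thesis unfolding interval_minor_def by blast
qed

lemma partition_imp_embedding:
  assumes "has_partition_containing P k l M m n"
  shows "has_embedding P k l M m n"
proof -
  obtain r c where r: "cut_sequence k m r" and c: "cut_sequence l n c"
      and P: "\<forall>i\<in>{1..k}. \<forall>j\<in>{1..l}. P i j \<longrightarrow> blocks r c M i j"
    using assms unfolding has_partition_containing_iff by blast
  have r_st: "\<forall>x<k. r x < r (Suc x)" and c_st: "\<forall>y<l. c y < c (Suc y)"
    using r c by (simp_all add: cut_sequence_def)
  let ?G = "{1..k} \<times> {1..l}"
  define good where "good e p \<longleftrightarrow>
      fst p \<in> {r (fst e - 1)<..r (fst e)} \<and> snd p \<in> {c (snd e - 1)<..c (snd e)} \<and>
      (P (fst e) (snd e) \<longrightarrow> M (fst p) (snd p))" for e p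
  define \<phi> where "\<phi> e = (SOME p. good e p)" for e
  have good: "good e (\<phi> e)" if "e \<in> ?G" for e
    unfolding \<phi>_def
  proof (rule someI_ex)
    show "\<exists>p. good e p"
    proof (cases "P (fst e) (snd e)")
      case True
      then show ?thesis using P that unfolding good_def blocks_def by fastforce
    next
      case False
      have "r (fst e - 1) < r (fst e)" "c (snd e - 1) < c (snd e)"
        using increasing_gap[OF r_st, of "fst e - 1" "fst e"] increasing_gap[OF c_st, of "snd e - 1" "snd e"] that
        by auto
      with False show ?thesis by (intro exI[of _ "(r (fst e), c (snd e))"]) (simp add: good_def)
    qed
  qed
  have row_block: "r (fst e - 1) < fst (\<phi> e) \<and> fst (\<phi> e) \<le> r (fst e)"
    and col_block: "c (snd e - 1) < snd (\<phi> e) \<and> snd (\<phi> e) \<le> c (snd e)" if "e \<in> ?G" for e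
    using good[OF that] by (simp_all add: good_def)
  have "is_embedding \<phi> P k l M m n"
    unfolding is_embedding_def
  proof (intro conjI ballI impI)
    fix e assume "e \<in> ?G"
    then show "\<phi> e \<in> {1..m} \<times> {1..n}"
      using good[of e] increasing_gap[OF r_st, of "fst e" k] increasing_gap[OF c_st, of "snd e" l] r c
      by (auto simp: good_def cut_sequence_def mem_Times_iff)
  next
    fix e assume "e \<in> ?G" "P (fst e) (snd e)"
    then show "M (fst (\<phi> e)) (snd (\<phi> e))" using good by (simp add: good_def)
  next
    fix e1 e2 assume "e1 \<in> ?G" "e2 \<in> ?G" "fst e1 < fst e2"
    moreover have "r (fst e1) \<le> r (fst e2 - 1)"
      using \<open>e2 \<in> ?G\<close> \<open>fst e1 < fst e2\<close> by (intro increasing_mono[OF r_st]) auto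
    ultimately show "fst (\<phi> e1) < fst (\<phi> e2)"
      using row_block[of e1] row_block[of e2] by linarith
  next
    fix e1 e2 assume "e1 \<in> ?G" "e2 \<in> ?G" "snd e1 < snd e2"
    moreover have "c (snd e1) \<le> c (snd e2 - 1)"
      using \<open>e2 \<in> ?G\<close> \<open>snd e1 < snd e2\<close> by (intro increasing_mono[OF c_st]) auto
    ultimately show "snd (\<phi> e1) < snd (\<phi> e2)"
      using col_block[of e1] col_block[of e2] by linarith
  qed
  then show ?thesis unfolding has_embedding_def by blast
qed

definition row_increasing :: "nat \<Rightarrow> nat \<Rightarrow> (nat \<times> nat \<Rightarrow> nat) \<Rightarrow> bool" where
  "row_increasing k l g \<longleftrightarrow>
     (\<forall>e1\<in>{1..k} \<times> {1..l}. \<forall>e2\<in>{1..k} \<times> {1..l}. fst e1 < fst e2 \<longrightarrow> g e1 < g e2)"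

lemma row_increasing_gap:
  fixes g :: "nat \<times> nat \<Rightarrow> nat"
  assumes mono: "row_increasing k l g"
    and e1: "e1 \<in> {1..k} \<times> {1..l}" and e2: "e2 \<in> {1..k} \<times> {1..l}" and "fst e1 < fst e2"
  shows "g e1 + (fst e2 - fst e1) \<le> g e2"
proof -
  define f where "f x = g (Suc x, snd e2)" for x
  have "\<forall>x<k - 1. f x < f (Suc x)"
    using mono e2 by (auto simp: row_increasing_def f_def)
  then have "f (fst e1) + (fst e2 - 1 - fst e1) \<le> f (fst e2 - 1)"
    using \<open>fst e1 < fst e2\<close> e2 by (intro increasing_gap) auto
  moreover have "g e1 < f (fst e1)"
    using mono e1 e2 \<open>fst e1 < fst e2\<close> by (auto simp: row_increasing_def f_def)
  moreover have "f (fst e2 - 1) = g e2"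
    using e2 by (auto simp: f_def)
  ultimately show ?thesis using \<open>fst e1 < fst e2\<close> by linarith
qed

lemma row_increasing_bounds:
  fixes g :: "nat \<times> nat \<Rightarrow> nat"
  assumes mono: "row_increasing k l g"
    and range: "\<forall>e\<in>{1..k} \<times> {1..l}. g e \<in> {1..m}" and e: "e \<in> {1..k} \<times> {1..l}"
  shows "fst e \<le> g e" and "int k - int (fst e) \<le> int m - int (g e)"
proof -
  have ge: "g e \<in> {1..m}" using range e by blast
  have first: "g (1, snd e) \<in> {1..m}" and last: "g (k, snd e) \<in> {1..m}"
    using range e by (auto simp: mem_Times_iff)
  show "fst e \<le> g e"
  proof (cases "fst e = 1")
    case False
    then have "g (1, snd e) + (fst e - 1) \<le> g e"
      using row_increasing_gap[OF mono, of "(1, snd e)" e] e by auto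
    with first e show ?thesis by (auto simp: mem_Times_iff)
  qed (use ge in simp)
  show "int k - int (fst e) \<le> int m - int (g e)"
  proof (cases "fst e = k")
    case False
    then have "g e + (k - fst e) \<le> g (k, snd e)"
      using row_increasing_gap[OF mono e, of "(k, snd e)"] e by auto
    with last e show ?thesis by auto
  qed (use ge in simp)
qed

lemma embedding_imp_partial_embedding:
  assumes "has_embedding P k l M m n" "1 \<le> k" "1 \<le> l"
  shows "has_partial_embedding P k l M m n"
proof -
  let ?G = "{1..k} \<times> {1..l}" and ?G' = "{1..l} \<times> {1..k}"
  obtain \<phi> where \<phi>: "is_embedding \<phi> P k l M m n"
    using assms(1) unfolding has_embedding_def by blast
  define row where "row e = fst (\<phi> e)" for e
  define col where "col e = snd (\<phi> (prod.swap e))" for e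
  have row_mono: "row_increasing k l row" and row_range: "\<forall>e\<in>?G. row e \<in> {1..m}"
    using \<phi> by (auto simp: is_embedding_def row_increasing_def row_def mem_Times_iff)
  have col_mono: "row_increasing l k col" and col_range: "\<forall>e\<in>?G'. col e \<in> {1..n}"
    using \<phi> by (auto simp: is_embedding_def row_increasing_def col_def mem_Times_iff)
  have swap: "prod.swap e \<in> ?G'" "snd (\<phi> e) = col (prod.swap e)" if "e \<in> ?G" for e
    using that by (auto simp: col_def)
  have "is_partial_embedding ?G \<phi> P k l M m n"
    unfolding is_partial_embedding_def
  proof (intro conjI ballI impI)
    show "?G \<noteq> {}" using assms(2,3) by auto
    show "\<phi> e \<in> {1..m} \<times> {1..n}" if "e \<in> ?G" for e
      using \<phi> that unfolding is_embedding_def by blast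
  next
    fix e assume "e \<in> ?G"
    then show "fst e \<le> fst (\<phi> e)" "int k - int (fst e) \<le> int m - int (fst (\<phi> e))"
      using row_increasing_bounds[OF row_mono row_range] by (simp_all add: row_def)
    show "snd e \<le> snd (\<phi> e)" "int l - int (snd e) \<le> int n - int (snd (\<phi> e))"
      using row_increasing_bounds[OF col_mono col_range swap(1)[OF \<open>e \<in> ?G\<close>]] swap[OF \<open>e \<in> ?G\<close>]
      by simp_all
  next
    fix e1 e2 assume "e1 \<in> ?G" "e2 \<in> ?G"
    show "int (fst e2) - int (fst e1) \<le> int (fst (\<phi> e2)) - int (fst (\<phi> e1))" if "fst e1 < fst e2"
      using row_increasing_gap[OF row_mono \<open>e1 \<in> ?G\<close> \<open>e2 \<in> ?G\<close> that] by (simp add: row_def)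
    show "int (snd e2) - int (snd e1) \<le> int (snd (\<phi> e2)) - int (snd (\<phi> e1))" if "snd e1 < snd e2"
      using row_increasing_gap[OF col_mono swap(1)[OF \<open>e1 \<in> ?G\<close>] swap(1)[OF \<open>e2 \<in> ?G\<close>]] that
        swap(2)[OF \<open>e1 \<in> ?G\<close>] swap(2)[OF \<open>e2 \<in> ?G\<close>]
      by simp
  qed (use \<phi> in \<open>auto simp: is_embedding_def\<close>)
  then show ?thesis unfolding has_partial_embedding_def by blast
qed

lemma cut_sequence_through_points:
  fixes f g :: "'a \<Rightarrow> nat"
  assumes "finite S" and "e0 \<in> S"
    and lower: "\<forall>e\<in>S. 1 \<le> f e \<and> f e \<le> g e"
    and upper: "\<forall>e\<in>S. int k - int (f e) \<le> int m - int (g e)"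
    and gap: "\<forall>e1\<in>S. \<forall>e2\<in>S. f e1 < f e2 \<longrightarrow> int (f e2) - int (f e1) \<le> int (g e2) - int (g e1)"
  obtains r where "cut_sequence k m r" and "\<forall>e\<in>S. r (f e - 1) < g e \<and> g e \<le> r (f e)"
proof
  \<comment> \<open>r x is the largest lower bound that x itself and the points in rows up to x impose on
      the x-th cut; the gap condition keeps it below the points of later rows.\<close>
  define A where "A x = insert x ((\<lambda>e. g e + (x - f e)) ` {e\<in>S. f e \<le> x})" for x
  define r where "r x = Max (A x)" for x
  have A: "finite (A x)" "A x \<noteq> {}" for x
    using \<open>finite S\<close> by (simp_all add: A_def)
  have "r x < r (Suc x)" for x
  proof -
    have "Suc a \<in> A (Suc x)" if "a \<in> A x" for a
      using that by (auto simp: A_def Suc_diff_le image_iff)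
    then have "Suc (r x) \<le> r (Suc x)"
      unfolding r_def using A by (simp add: Max_in)
    then show ?thesis by simp
  qed
  moreover have "r k \<le> m"
    unfolding r_def Max_le_iff[OF A]
    using upper lower \<open>e0 \<in> S\<close> by (force simp: A_def)
  ultimately show "cut_sequence k m r"
    by (simp add: cut_sequence_def)
  show "\<forall>e\<in>S. r (f e - 1) < g e \<and> g e \<le> r (f e)"
  proof
    fix e assume "e \<in> S"
    have "g e \<in> A (f e)" using \<open>e \<in> S\<close> by (force simp: A_def)
    then have "g e \<le> r (f e)" unfolding r_def using A by simp
    moreover have "a < g e" if "a \<in> A (f e - 1)" for a
      using that lower gap \<open>e \<in> S\<close> by (force simp: A_def)
    then have "r (f e - 1) < g e" unfolding r_def using A by simp
    ultimately show "r (f e - 1) < g e \<and> g e \<le> r (f e)" by simp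
  qed
qed

lemma partial_embedding_imp_partition:
  assumes "has_partial_embedding P k l M m n"
  shows "has_partition_containing P k l M m n"
proof -
  obtain S \<psi> where "S \<noteq> {}" and S: "S \<subseteq> {1..k} \<times> {1..l}"
    and ones: "\<forall>e\<in>{1..k} \<times> {1..l}. P (fst e) (snd e) \<longrightarrow> e \<in> S \<and> M (fst (\<psi> e)) (snd (\<psi> e))"
    and bounds: "\<forall>e\<in>S. fst e \<le> fst (\<psi> e) \<and> snd e \<le> snd (\<psi> e) \<and>
             int k - int (fst e) \<le> int m - int (fst (\<psi> e)) \<and>
             int l - int (snd e) \<le> int n - int (snd (\<psi> e))"
    and gaps: "\<forall>e1\<in>S. \<forall>e2\<in>S.
        (fst e1 < fst e2 \<longrightarrow> int (fst e2) - int (fst e1) \<le> int (fst (\<psi> e2)) - int (fst (\<psi> e1))) \<and>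
        (snd e1 < snd e2 \<longrightarrow> int (snd e2) - int (snd e1) \<le> int (snd (\<psi> e2)) - int (snd (\<psi> e1)))"
    using assms unfolding has_partial_embedding_def is_partial_embedding_def by blast
  then obtain e0 where "e0 \<in> S" by blast
  have "finite S" using S by (rule finite_subset) simp
  have "\<forall>e\<in>S. 1 \<le> fst e \<and> fst e \<le> fst (\<psi> e)"
    and "\<forall>e\<in>S. int k - int (fst e) \<le> int m - int (fst (\<psi> e))"
    and "\<forall>e1\<in>S. \<forall>e2\<in>S. fst e1 < fst e2 \<longrightarrow>
      int (fst e2) - int (fst e1) \<le> int (fst (\<psi> e2)) - int (fst (\<psi> e1))"
    using S bounds gaps by auto
  then obtain r where r: "cut_sequence k m r"
      and r_blocks: "\<forall>e\<in>S. r (fst e - 1) < fst (\<psi> e) \<and> fst (\<psi> e) \<le> r (fst e)"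
    by (rule cut_sequence_through_points[OF \<open>finite S\<close> \<open>e0 \<in> S\<close>])
  have "\<forall>e\<in>S. 1 \<le> snd e \<and> snd e \<le> snd (\<psi> e)"
    and "\<forall>e\<in>S. int l - int (snd e) \<le> int n - int (snd (\<psi> e))"
    and "\<forall>e1\<in>S. \<forall>e2\<in>S. snd e1 < snd e2 \<longrightarrow>
      int (snd e2) - int (snd e1) \<le> int (snd (\<psi> e2)) - int (snd (\<psi> e1))"
    using S bounds gaps by auto
  then obtain c where c: "cut_sequence l n c"
      and c_blocks: "\<forall>e\<in>S. c (snd e - 1) < snd (\<psi> e) \<and> snd (\<psi> e) \<le> c (snd e)"
    by (rule cut_sequence_through_points[OF \<open>finite S\<close> \<open>e0 \<in> S\<close>])
  have "blocks r c M i j" if "i \<in> {1..k}" "j \<in> {1..l}" "P i j" for i j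
  proof -
    from ones that have "(i, j) \<in> S" "M (fst (\<psi> (i, j))) (snd (\<psi> (i, j)))" by auto
    with r_blocks c_blocks show ?thesis unfolding blocks_def by fastforce
  qed
  then show ?thesis
    unfolding has_partition_containing_iff using r c by blast
qed

theorem lemma2p1:
  fixes P M :: bmat and k l m n :: nat
  assumes "1 \<le> k" and "1 \<le> l" and "1 \<le> m" and "1 \<le> n"
  shows "(interval_minor P k l M m n \<longleftrightarrow> has_partition_containing P k l M m n)
       \<and> (has_partition_containing P k l M m n \<longleftrightarrow> has_embedding P k l M m n)
       \<and> (has_embedding P k l M m n \<longleftrightarrow> has_partial_embedding P k l M m n)"
proof -
  have "interval_minor P k l M m n \<longleftrightarrow> has_partition_containing P k l M m n"
    using interval_minor_imp_partition partition_imp_interval_minor assms(1,2) by blast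
  moreover have "has_partition_containing P k l M m n \<Longrightarrow> has_embedding P k l M m n"
    by (rule partition_imp_embedding)
  moreover have "has_embedding P k l M m n \<Longrightarrow> has_partial_embedding P k l M m n"
    using embedding_imp_partial_embedding assms(1,2) by blast
  moreover have "has_partial_embedding P k l M m n \<Longrightarrow> has_partition_containing P k l M m n"
    by (rule partial_embedding_imp_partition)
  ultimately show ?thesis by blast
qed

end
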